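(* Let $G\curvearrowright X$ be a Borel action of a countable group on a standard Borel space. If for every $x\in X$ the stabilizer $\mathrm{Stab}_G(x)$ is uniformly coamenable in $G$, then the orbit equivalence relation $E_G^X$ is Borel amenable.
   Context: For a set $A$, $\mathrm{Prob}(A)$ is the set of nonnegative $p\in\ell^1(A)$ with $\|p\|_1=1$. For an action $G\curvearrowright Y$, $p\in\mathrm{Prob}(G)$ and $y\in Y$, $py\in\mathrm{Prob}(G\cdot y)$ denotes the pushforward of $p$ under $g\mapsto gy$. Given a finite $S\subseteq G$ and $\varepsilon>0$, an $(S,\varepsilon)$-Reiter function for $G\curvearrowright Y$ is some $p\in\mathrm{Prob}(G)$ such that $\|py-psy\|_1<\varepsilon$ for all $s\in S$ and all $y\in Y$. A subgroup $H\le G$ is uniformly coamenable if for every finite $S\subseteq G$ and every $\varepsilon>0$ the action $G\curvearrowright G/H$ has an $(S,\varepsilon)$-Reiter function. A CBER $E$ on $X$ is Borel amenable if there is a sequence $(p_i)_{i\in\mathbb N}$, each $p_i$ assigning to every $x\in X$ some $p^x_i\in\mathrm{Prob}([x]_E)$, such that for every $(x,y)\in E$ and $\varepsilon>0$, for all but finitely many $i$, $\|p_i^x-p_i^y\|_1<\varepsilon$, and such that for each $i$ the map $E\to\mathbb R$, $(x,y)\mapsto p_i^x(\{y\})$ is Borel. *)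

theory Defs
  imports "HOL-Analysis.Analysis"
begin

definition prob_on :: "'a set \<Rightarrow> ('a \<Rightarrow> real) \<Rightarrow> bool" where
  "prob_on A p \<longleftrightarrow> (\<forall>z. 0 \<le> p z) \<and> (\<forall>z. z \<notin> A \<longrightarrow> p z = 0)
     \<and> p summable_on A \<and> (\<Sum>\<^sub>\<infinity> z\<in>A. p z) = 1"

definition l1dist :: "('a \<Rightarrow> real) \<Rightarrow> ('a \<Rightarrow> real) \<Rightarrow> real" where
  "l1dist f g = (\<Sum>\<^sub>\<infinity> z. \<bar>f z - g z\<bar>)"

definition pushfwd :: "('g \<Rightarrow> real) \<Rightarrow> ('g \<Rightarrow> 'y \<Rightarrow> 'y) \<Rightarrow> 'y \<Rightarrow> 'y \<Rightarrow> real" where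
  "pushfwd p b y w = (\<Sum>\<^sub>\<infinity> g\<in>{g. b g y = w}. p g)"

definition reiter_fn :: "('g \<Rightarrow> 'y \<Rightarrow> 'y) \<Rightarrow> 'y set \<Rightarrow> 'g set \<Rightarrow> real \<Rightarrow> ('g \<Rightarrow> real) \<Rightarrow> bool" where
  "reiter_fn b Y S eps p \<longleftrightarrow> prob_on UNIV p \<and>
     (\<forall>s\<in>S. \<forall>y\<in>Y. l1dist (pushfwd p b y) (pushfwd p b (b s y)) < eps)"

definition left_cosets :: "'g::group_add set \<Rightarrow> 'g set set" where
  "left_cosets H = {(\<lambda>k. g + k) ` H | g. True}"

definition coset_action :: "'g::group_add \<Rightarrow> 'g set \<Rightarrow> 'g set" where
  "coset_action g C = (\<lambda>k. g + k) ` C"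

definition uniformly_coamenable :: "'g::group_add set \<Rightarrow> bool" where
  "uniformly_coamenable H \<longleftrightarrow>
     (\<forall>S eps. finite S \<longrightarrow> eps > 0 \<longrightarrow>
        (\<exists>p. reiter_fn coset_action (left_cosets H) S eps p))"

definition borel_action :: "'x measure \<Rightarrow> ('g::group_add \<Rightarrow> 'x \<Rightarrow> 'x) \<Rightarrow> bool" where
  "borel_action M a \<longleftrightarrow>
     (\<forall>x\<in>space M. a 0 x = x) \<and>
     (\<forall>g h. \<forall>x\<in>space M. a (g + h) x = a g (a h x)) \<and>
     (\<forall>g. a g \<in> M \<rightarrow>\<^sub>M M)"

definition stabilizer :: "('g \<Rightarrow> 'x \<Rightarrow> 'x) \<Rightarrow> 'x \<Rightarrow> 'g set" where
  "stabilizer a x = {g. a g x = x}"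

definition orbit_eqrel :: "'x measure \<Rightarrow> ('g \<Rightarrow> 'x \<Rightarrow> 'x) \<Rightarrow> ('x \<times> 'x) set" where
  "orbit_eqrel M a = {(x, a g x) | x g. x \<in> space M}"

definition borel_amenable :: "'x measure \<Rightarrow> ('x \<times> 'x) set \<Rightarrow> bool" where
  "borel_amenable M E \<longleftrightarrow>
     (\<exists>p :: nat \<Rightarrow> 'x \<Rightarrow> 'x \<Rightarrow> real.
        (\<forall>i. \<forall>x\<in>space M. prob_on (E `` {x}) (p i x)) \<and>
        (\<forall>x y. (x, y) \<in> E \<longrightarrow>
           (\<forall>eps>0. eventually (\<lambda>i. l1dist (p i x) (p i y) < eps) sequentially)) \<and>
        (\<forall>i. (\<lambda>(x, y). p i x y) \<in> borel_measurable (restrict_space (M \<Otimes>\<^sub>M M) E)))"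

end

theory Submission
  imports Defs
begin

text \<open>
  Enumerate G and fix i. For every x, uniform coamenability of Stab(x) provides a Reiter function
  for the first i+1 group elements and tolerance 1/(i+1) that works simultaneously at every point
  of the orbit Gx, which is G/Stab(x) as a G-set. Reiter functions are stable under small
  l1-perturbations, so one can be found among the countably many finitely supported rational
  probability vectors. Taking the first one in a fixed enumeration gives a choice that is constant
  on orbits (the condition concerns the whole orbit) and Borel in x (for finitely supported
  vectors the l1-distances involved are finite sums of Borel functions). Its pushforward along
  g \<mapsto> gx is the i-th term of the required sequence.
\<close>

section \<open>Pushforwards and l1-distance\<close>

lemma summable_on_abs_diff:
  fixes u v :: "'a \<Rightarrow> real"
  assumes "u summable_on A" "v summable_on A"
  shows "(\<lambda>z. \<bar>u z - v z\<bar>) summable_on A"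
proof -
  have "(\<lambda>z. u z - v z) summable_on A"
    using summable_on_add[OF assms(1) summable_on_uminus[THEN iffD2, OF assms(2)]] by simp
  then show ?thesis
    using summable_on_iff_abs_summable_on_real[of "\<lambda>z. u z - v z" A] by simp
qed

lemma l1dist_triangle:
  fixes u v w :: "'a \<Rightarrow> real"
  assumes "u summable_on UNIV" "v summable_on UNIV" "w summable_on UNIV"
  shows "l1dist u w \<le> l1dist u v + l1dist v w"
proof -
  have "l1dist u w \<le> (\<Sum>\<^sub>\<infinity>z. \<bar>u z - v z\<bar> + \<bar>v z - w z\<bar>)"
    unfolding l1dist_def
    by (rule infsum_mono) (auto intro!: summable_on_abs_diff summable_on_add assms)
  also have "\<dots> = l1dist u v + l1dist v w"
    unfolding l1dist_def by (rule infsum_add) (auto intro!: summable_on_abs_diff assms)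
  finally show ?thesis .
qed

lemma has_sum_fibre_sums:
  fixes f :: "'a \<Rightarrow> real"
  assumes f: "f summable_on UNIV"
  shows "((\<lambda>w. \<Sum>\<^sub>\<infinity>g\<in>{g. b g = w}. f g) has_sum (\<Sum>\<^sub>\<infinity>g. f g)) UNIV"
proof -
  let ?S = "Sigma UNIV (\<lambda>w. {g. b g = w})"
  have inj: "inj_on snd ?S" by (auto simp: inj_on_def)
  have "snd ` ?S = UNIV" by (auto simp: image_iff)
  then have "(f has_sum (\<Sum>\<^sub>\<infinity>g. f g)) (snd ` ?S)"
    using f by simp
  then have "((f \<circ> snd) has_sum (\<Sum>\<^sub>\<infinity>g. f g)) ?S"
    using has_sum_reindex[OF inj] by blast
  moreover have "((\<lambda>g. (f \<circ> snd) (w, g)) has_sum (\<Sum>\<^sub>\<infinity>g\<in>{g. b g = w}. f g)) {g. b g = w}" for w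
    using summable_on_subset_banach[OF f] by simp
  ultimately show ?thesis by (rule has_sum_Sigma')
qed

lemma pushfwd_summable:
  fixes p :: "'g \<Rightarrow> real"
  assumes "p summable_on UNIV"
  shows "pushfwd p b y summable_on UNIV"
  using has_sum_fibre_sums[OF assms, of "\<lambda>g. b g y"]
  unfolding pushfwd_def[abs_def] summable_on_def by blast

lemma l1dist_pushfwd_le:
  fixes p q :: "'g \<Rightarrow> real"
  assumes p: "p summable_on UNIV" and q: "q summable_on UNIV"
  shows "l1dist (pushfwd p b y) (pushfwd q b y) \<le> l1dist p q"
proof -
  define F where "F w = {g. b g y = w}" for w
  have d: "(\<lambda>g. \<bar>p g - q g\<bar>) summable_on UNIV"
    using summable_on_abs_diff[OF p q] .
  have sum_d: "((\<lambda>w. \<Sum>\<^sub>\<infinity>g\<in>F w. \<bar>p g - q g\<bar>) has_sum l1dist p q) UNIV"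
    unfolding F_def l1dist_def by (rule has_sum_fibre_sums[OF d])
  have le: "\<bar>pushfwd p b y w - pushfwd q b y w\<bar> \<le> (\<Sum>\<^sub>\<infinity>g\<in>F w. \<bar>p g - q g\<bar>)" for w
  proof -
    have "pushfwd p b y w - pushfwd q b y w = (\<Sum>\<^sub>\<infinity>g\<in>F w. p g - q g)"
      unfolding pushfwd_def F_def
      using infsum_add[OF summable_on_subset_banach[OF p] summable_on_uminus[THEN iffD2, OF summable_on_subset_banach[OF q]]]
        infsum_uminus[of q] by auto
    also have "\<bar>\<dots>\<bar> \<le> (\<Sum>\<^sub>\<infinity>g\<in>F w. \<bar>p g - q g\<bar>)"
    proof -
      have "(\<lambda>g. norm (p g - q g)) summable_on F w"
        using summable_on_subset_banach[OF d] by simp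
      from norm_infsum_bound[OF this] show ?thesis by simp
    qed
    finally show ?thesis .
  qed
  have "l1dist (pushfwd p b y) (pushfwd q b y) \<le> (\<Sum>\<^sub>\<infinity>w. \<Sum>\<^sub>\<infinity>g\<in>F w. \<bar>p g - q g\<bar>)"
    unfolding l1dist_def
    by (rule infsum_mono[OF summable_on_abs_diff[OF pushfwd_summable[OF p] pushfwd_summable[OF q]] _ le])
      (use sum_d in \<open>simp add: has_sum_iff\<close>)
  also have "\<dots> = l1dist p q"
    using sum_d by (simp add: has_sum_iff)
  finally show ?thesis .
qed

lemma l1dist_fibre_sums_comp_inj:
  fixes p :: "'g \<Rightarrow> real"
  assumes inj: "inj_on \<phi> (range f1 \<union> range f2)"
  shows "l1dist (\<lambda>z. \<Sum>\<^sub>\<infinity>g\<in>{g. \<phi> (f1 g) = z}. p g) (\<lambda>z. \<Sum>\<^sub>\<infinity>g\<in>{g. \<phi> (f2 g) = z}. p g)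
       = l1dist (\<lambda>w. \<Sum>\<^sub>\<infinity>g\<in>{g. f1 g = w}. p g) (\<lambda>w. \<Sum>\<^sub>\<infinity>g\<in>{g. f2 g = w}. p g)"
proof -
  let ?R = "range f1 \<union> range f2"
  define T where "T w = \<bar>(\<Sum>\<^sub>\<infinity>g\<in>{g. f1 g = w}. p g) - (\<Sum>\<^sub>\<infinity>g\<in>{g. f2 g = w}. p g)\<bar>" for w
  define T' where "T' z = \<bar>(\<Sum>\<^sub>\<infinity>g\<in>{g. \<phi> (f1 g) = z}. p g) - (\<Sum>\<^sub>\<infinity>g\<in>{g. \<phi> (f2 g) = z}. p g)\<bar>" for z
  have T'_\<phi>: "T' (\<phi> w) = T w" if "w \<in> ?R" for w
  proof -
    have "{g. \<phi> (f1 g) = \<phi> w} = {g. f1 g = w}" "{g. \<phi> (f2 g) = \<phi> w} = {g. f2 g = w}"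
      using inj that by (auto dest: inj_onD)
    then show ?thesis by (simp add: T_def T'_def)
  qed
  have "l1dist (\<lambda>z. \<Sum>\<^sub>\<infinity>g\<in>{g. \<phi> (f1 g) = z}. p g) (\<lambda>z. \<Sum>\<^sub>\<infinity>g\<in>{g. \<phi> (f2 g) = z}. p g)
      = (\<Sum>\<^sub>\<infinity>z\<in>\<phi> ` ?R. T' z)"
  proof -
    have "{g. \<phi> (f1 g) = z} = {} \<and> {g. \<phi> (f2 g) = z} = {}" if "z \<notin> \<phi> ` ?R" for z
      using that by auto
    then show ?thesis
      unfolding l1dist_def T'_def by (intro infsum_cong_neutral) auto
  qed
  also have "\<dots> = (\<Sum>\<^sub>\<infinity>w\<in>?R. T' (\<phi> w))"
    using infsum_reindex[OF inj, of T'] by (simp add: comp_def)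
  also have "\<dots> = (\<Sum>\<^sub>\<infinity>w\<in>?R. T w)"
    using T'_\<phi> by (rule infsum_cong)
  also have "\<dots> = l1dist (\<lambda>w. \<Sum>\<^sub>\<infinity>g\<in>{g. f1 g = w}. p g) (\<lambda>w. \<Sum>\<^sub>\<infinity>g\<in>{g. f2 g = w}. p g)"
  proof -
    have "{g. f1 g = w} = {} \<and> {g. f2 g = w} = {}" if "w \<notin> ?R" for w
      using that by auto
    then show ?thesis
      unfolding l1dist_def T_def by (intro infsum_cong_neutral) auto
  qed
  finally show ?thesis .
qed

lemma prob_on_pushfwd:
  assumes "prob_on UNIV p"
  shows "prob_on (range (\<lambda>g. b g y)) (pushfwd p b y)"
proof -
  have p: "p summable_on UNIV" "(\<Sum>\<^sub>\<infinity>g. p g) = 1" "\<And>g. 0 \<le> p g"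
    using assms by (auto simp: prob_on_def)
  have outside: "pushfwd p b y w = 0" if "w \<notin> range (\<lambda>g. b g y)" for w
  proof -
    have "{g. b g y = w} = {}"
      using that by auto
    then show ?thesis by (simp add: pushfwd_def)
  qed
  have "(pushfwd p b y has_sum 1) UNIV"
    using has_sum_fibre_sums[OF p(1), of "\<lambda>g. b g y"] p(2) by (simp add: pushfwd_def[abs_def])
  then have "(pushfwd p b y has_sum 1) (range (\<lambda>g. b g y))"
    using has_sum_cong_neutral[of UNIV "range (\<lambda>g. b g y)" "pushfwd p b y" "pushfwd p b y"]
    by (simp add: outside)
  then show ?thesis
    unfolding prob_on_def using outside p(3)
    by (auto simp: has_sum_iff pushfwd_def intro: infsum_nonneg)
qed

lemma reiter_fn_perturb:
  fixes p q :: "'g \<Rightarrow> real"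
  assumes p: "reiter_fn b Y S eps p" and q: "prob_on UNIV q" and pq: "l1dist p q \<le> \<delta>"
  shows "reiter_fn b Y S (eps + 2 * \<delta>) q"
  unfolding reiter_fn_def
proof (intro conjI ballI q)
  fix s y assume s: "s \<in> S" and y: "y \<in> Y"
  have ps: "p summable_on UNIV" and qs: "q summable_on UNIV"
    using p q by (auto simp: reiter_fn_def prob_on_def)
  have qp: "l1dist q p = l1dist p q"
    by (simp add: l1dist_def abs_minus_commute)
  let ?P = "pushfwd p b" and ?Q = "pushfwd q b"
  have "l1dist (?Q y) (?Q (b s y)) \<le> l1dist (?Q y) (?P y) + l1dist (?P y) (?Q (b s y))"
    by (rule l1dist_triangle) (auto intro: pushfwd_summable ps qs)
  also have "\<dots> \<le> l1dist (?Q y) (?P y) + (l1dist (?P y) (?P (b s y)) + l1dist (?P (b s y)) (?Q (b s y)))"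
    by (intro add_left_mono l1dist_triangle) (auto intro: pushfwd_summable ps qs)
  also have "\<dots> < \<delta> + (eps + \<delta>)"
    using l1dist_pushfwd_le[OF qs ps, of b y] l1dist_pushfwd_le[OF ps qs, of b "b s y"] qp pq p s y
    unfolding reiter_fn_def by (smt (verit))
  finally show "l1dist (?Q y) (?Q (b s y)) < eps + 2 * \<delta>" by simp
qed

section \<open>Rational approximation of probability vectors\<close>

lemma infsum_finite_support:
  fixes q :: "'a \<Rightarrow> real"
  assumes "finite F" "\<And>g. g \<notin> F \<Longrightarrow> q g = 0"
  shows "(\<Sum>\<^sub>\<infinity>g\<in>A. q g) = (\<Sum>g\<in>F \<inter> A. q g)"
proof -
  have "(\<Sum>\<^sub>\<infinity>g\<in>A. q g) = (\<Sum>\<^sub>\<infinity>g\<in>F \<inter> A. q g)"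
    by (rule infsum_cong_neutral) (use assms(2) in auto)
  then show ?thesis
    using assms(1) by simp
qed

lemma summable_on_finite_support:
  fixes q :: "'a \<Rightarrow> real"
  assumes "finite F" "\<And>g. g \<notin> F \<Longrightarrow> q g = 0"
  shows "q summable_on A"
  using summable_on_cong_neutral[of A "F \<inter> A" q] assms by (auto intro: summable_on_finite)

text \<open>Lists form a countable type, so a first admissible weight vector can be chosen measurably.\<close>
definition rat_weights :: "('a \<times> rat) list \<Rightarrow> 'a \<Rightarrow> real" where
  "rat_weights L g = (\<Sum>(h, r)\<leftarrow>L. if h = g then real_of_rat r else 0)"

lemma rat_weights_Cons:
  "rat_weights ((h, r) # L) g = (if h = g then real_of_rat r else 0) + rat_weights L g"
  by (simp add: rat_weights_def)

lemma rat_weights_map: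
  assumes "distinct xs"
  shows "rat_weights (map (\<lambda>h. (h, \<rho> h)) xs) g = (if g \<in> set xs then real_of_rat (\<rho> g) else 0)"
  using assms by (induction xs) (auto simp: rat_weights_def)

lemma rat_weights_eq_0: "g \<notin> fst ` set L \<Longrightarrow> rat_weights L g = 0"
  by (induction L) (auto simp: rat_weights_def)

lemma prob_on_completion:
  fixes p r :: "'a \<Rightarrow> real" and h0 :: 'a
  assumes p: "prob_on UNIV p"
    and r: "\<And>g. 0 \<le> r g" "\<And>g. r g \<le> p g"
    and F: "finite F" "\<And>g. g \<notin> F \<Longrightarrow> r g = 0"
  defines "c \<equiv> 1 - sum r F"
  defines "q \<equiv> \<lambda>g. r g + (if g = h0 then c else 0)"
  shows "prob_on UNIV q" and "l1dist p q \<le> 2 * c"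
proof -
  have ps: "p summable_on UNIV" and p1: "(\<Sum>\<^sub>\<infinity>g. p g) = 1"
    using p by (auto simp: prob_on_def)
  have rs: "r summable_on UNIV" and r_sum: "(\<Sum>\<^sub>\<infinity>g. r g) = sum r F"
    using summable_on_finite_support[OF F] infsum_finite_support[OF F, where A = UNIV] by auto
  have ds: "(\<lambda>g. p g - r g) summable_on UNIV"
    using summable_on_add[OF ps summable_on_uminus[THEN iffD2, OF rs]] by simp
  have d_sum: "(\<Sum>\<^sub>\<infinity>g. p g - r g) = c"
    using infsum_add[OF ps summable_on_uminus[THEN iffD2, OF rs]] infsum_uminus[of r]
    by (simp add: p1 r_sum c_def)
  have c: "0 \<le> c"
    unfolding d_sum[symmetric] by (rule infsum_nonneg) (use r(2) in simp)
  have es: "(\<lambda>g. if g = h0 then c else 0) summable_on UNIV"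
    and e_sum: "(\<Sum>\<^sub>\<infinity>g. if g = h0 then c else 0) = c"
    using summable_on_finite_support[of "{h0}"] infsum_finite_support[of "{h0}"] by auto
  have qs: "q summable_on UNIV"
    unfolding q_def using summable_on_add[OF rs es] .
  have "(\<Sum>\<^sub>\<infinity>g. q g) = sum r F + c"
    unfolding q_def using infsum_add[OF rs es] r_sum e_sum by simp
  then show "prob_on UNIV q"
    using qs r(1) c by (auto simp: prob_on_def q_def c_def)
  have "l1dist p q \<le> (\<Sum>\<^sub>\<infinity>g. (p g - r g) + (if g = h0 then c else 0))"
    unfolding l1dist_def
  proof (rule infsum_mono)
    show "(\<lambda>g. \<bar>p g - q g\<bar>) summable_on UNIV"
      using summable_on_abs_diff[OF ps qs] .
    show "(\<lambda>g. (p g - r g) + (if g = h0 then c else 0)) summable_on UNIV"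
      using summable_on_add[OF ds es] .
    show "\<bar>p g - q g\<bar> \<le> (p g - r g) + (if g = h0 then c else 0)" for g
      using r(2)[of g] c by (cases "g = h0") (auto simp: q_def abs_le_iff)
  qed
  also have "\<dots> = 2 * c"
    using infsum_add[OF ds es] d_sum e_sum by simp
  finally show "l1dist p q \<le> 2 * c" .
qed

lemma exists_rat_minorant:
  fixes p :: "'a \<Rightarrow> real"
  assumes p: "prob_on UNIV p" and \<delta>: "\<delta> > 0"
  shows "\<exists>F \<rho>. finite F \<and> (\<forall>g. 0 \<le> real_of_rat (\<rho> g) \<and> real_of_rat (\<rho> g) \<le> p g)
                \<and> 1 - \<delta> < (\<Sum>g\<in>F. real_of_rat (\<rho> g))"
proof -
  have p0: "\<And>g. 0 \<le> p g" and ps: "p summable_on UNIV" and p1: "(\<Sum>\<^sub>\<infinity>g. p g) = 1"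
    using p by (auto simp: prob_on_def)
  obtain F where F: "finite F" "\<bar>sum p F - 1\<bar> \<le> \<delta> / 2"
    using infsum_finite_approximation[OF ps, of "\<delta> / 2"] \<delta> p1 by (auto simp: dist_real_def)
  define e where "e = \<delta> / (2 * (real (card F) + 1))"
  have e: "0 < e" "real (card F) * e < \<delta> / 2"
    using \<delta> by (auto simp: e_def field_simps)
  have "\<exists>\<rho>. 0 \<le> real_of_rat \<rho> \<and> real_of_rat \<rho> \<le> p g \<and> p g - e < real_of_rat \<rho>" for g
  proof -
    obtain x where "x \<in> \<rat>" "p g - e < x" "x < p g"
      using Rats_dense_in_real[of "p g - e" "p g"] e(1) by auto
    then obtain \<rho> where "p g - e < real_of_rat \<rho>" "real_of_rat \<rho> < p g"
      by (auto elim!: Rats_cases)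
    moreover have "real_of_rat (max 0 \<rho>) = max 0 (real_of_rat \<rho>)"
      by (simp add: max_def)
    ultimately show ?thesis
      using p0[of g] by (intro exI[of _ "max 0 \<rho>"]) auto
  qed
  then obtain \<rho> where \<rho>: "\<And>g. 0 \<le> real_of_rat (\<rho> g)" "\<And>g. real_of_rat (\<rho> g) \<le> p g"
    "\<And>g. p g - e < real_of_rat (\<rho> g)"
    by metis
  have "(\<Sum>g\<in>F. p g - real_of_rat (\<rho> g)) \<le> (\<Sum>g\<in>F. e)"
  proof (rule sum_mono)
    show "p g - real_of_rat (\<rho> g) \<le> e" for g
      using \<rho>(3)[of g] by linarith
  qed
  then have "sum p F - (\<Sum>g\<in>F. real_of_rat (\<rho> g)) < \<delta> / 2"
    using e(2) by (simp add: sum_subtractf)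
  then have "1 - \<delta> < (\<Sum>g\<in>F. real_of_rat (\<rho> g))"
    using F(2) unfolding abs_le_iff by linarith
  then show ?thesis
    using F \<rho>(1,2) by (intro exI[of _ F] exI[of _ \<rho>]) auto
qed

lemma rat_weights_dense:
  fixes p :: "'a \<Rightarrow> real"
  assumes p: "prob_on UNIV p" and \<delta>: "\<delta> > 0"
  shows "\<exists>L. prob_on UNIV (rat_weights L) \<and> l1dist p (rat_weights L) < \<delta>"
proof -
  obtain F \<rho> where F: "finite F" and \<rho>: "\<And>g. 0 \<le> real_of_rat (\<rho> g)" "\<And>g. real_of_rat (\<rho> g) \<le> p g"
    and mass: "1 - \<delta> / 2 < (\<Sum>g\<in>F. real_of_rat (\<rho> g))"
    using exists_rat_minorant[OF p, of "\<delta> / 2"] \<delta> by auto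
  obtain xs where xs: "set xs = F" "distinct xs"
    using finite_distinct_list[OF F] by blast
  define r where "r g = (if g \<in> F then real_of_rat (\<rho> g) else 0)" for g
  define c where "c = 1 - sum r F"
  define L where "L = (undefined, 1 - (\<Sum>g\<in>F. \<rho> g)) # map (\<lambda>h. (h, \<rho> h)) xs"
  have "sum r F = (\<Sum>g\<in>F. real_of_rat (\<rho> g))"
    by (simp add: r_def)
  then have c: "c < \<delta> / 2" and c_rat: "real_of_rat (1 - (\<Sum>g\<in>F. \<rho> g)) = c"
    using mass by (auto simp: c_def of_rat_diff of_rat_sum)
  have L: "rat_weights L = (\<lambda>g. r g + (if g = undefined then c else 0))"
    by (auto simp: L_def rat_weights_Cons rat_weights_map[OF xs(2)] xs(1) r_def c_rat)
  have r: "\<And>g. 0 \<le> r g" "\<And>g. r g \<le> p g" "\<And>g. g \<notin> F \<Longrightarrow> r g = 0"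
    using \<rho> p by (auto simp: r_def prob_on_def)
  have "prob_on UNIV (rat_weights L)" "l1dist p (rat_weights L) \<le> 2 * c"
    unfolding L c_def using prob_on_completion[OF p r(1,2) F r(3)] by auto
  then show ?thesis
    using c by (intro exI[of _ L]) auto
qed

section \<open>Measurability\<close>

lemma pushfwd_finite_support:
  fixes q :: "'g \<Rightarrow> real"
  assumes "finite F" "\<And>g. g \<notin> F \<Longrightarrow> q g = 0"
  shows "pushfwd q b y w = (\<Sum>h\<in>F. if b h y = w then q h else 0)"
  using infsum_finite_support[OF assms, where A = "{g. b g y = w}"] assms(1)
  by (simp add: pushfwd_def sum.inter_filter Int_def)

lemma l1dist_finite_support:
  fixes u v :: "'a \<Rightarrow> real"
  assumes "finite Z" "\<And>z. z \<notin> Z \<Longrightarrow> u z = 0" "\<And>z. z \<notin> Z \<Longrightarrow> v z = 0"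
  shows "l1dist u v = (\<Sum>z\<in>Z. \<bar>u z - v z\<bar>)"
  using infsum_finite_support[OF assms(1), where q = "\<lambda>z. \<bar>u z - v z\<bar>" and A = UNIV] assms(2,3)
  by (simp add: l1dist_def)

lemma sum_image_eq_sum_div_multiplicity:
  fixes T :: "'b \<Rightarrow> real"
  assumes J: "finite J"
  shows "sum T (f ` J) = (\<Sum>j\<in>J. T (f j) / (\<Sum>j'\<in>J. if f j' = f j then 1 else 0))"
proof -
  define m where "m y = (\<Sum>j'\<in>J. if f j' = y then 1 else 0 :: real)" for y
  have m: "m y = real (card {j\<in>J. f j = y})" for y
    using J by (simp add: m_def sum.inter_filter[symmetric])
  have "(\<Sum>j\<in>J. T (f j) / m (f j)) = (\<Sum>y\<in>f ` J. \<Sum>j\<in>{j\<in>J. f j = y}. T (f j) / m (f j))"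
    by (rule sum.image_gen[OF J])
  also have "\<dots> = sum T (f ` J)"
  proof (rule sum.cong[OF refl])
    fix y assume "y \<in> f ` J"
    then have "card {j\<in>J. f j = y} \<noteq> 0"
      using J by auto
    then show "(\<Sum>j\<in>{j\<in>J. f j = y}. T (f j) / m (f j)) = T y"
      by (simp add: m)
  qed
  finally show ?thesis
    by (simp add: m_def)
qed

text \<open>
  The support of the two pushforwards moves with x; weighting each of its points by the inverse
  of its multiplicity turns the l1-sum into a sum over the fixed index set F \<times> bool.
\<close>
lemma borel_measurable_l1dist_pushfwd:
  fixes q :: "'g \<Rightarrow> real" and b :: "'g \<Rightarrow> 'y \<Rightarrow> 'y::{second_countable_topology, t2_space}"
  assumes F: "finite F" "\<And>g. g \<notin> F \<Longrightarrow> q g = 0"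
    and [measurable]: "\<And>g. b g \<in> borel_measurable borel" "f \<in> borel_measurable M" "f' \<in> borel_measurable M"
  shows "(\<lambda>x. l1dist (pushfwd q b (f x)) (pushfwd q b (f' x))) \<in> borel_measurable M"
proof -
  define J where "J = F \<times> (UNIV :: bool set)"
  define pt where "pt x = (\<lambda>(h, t). b h (if t then f x else f' x))" for x
  define D where "D x z = \<bar>(\<Sum>h\<in>F. if b h (f x) = z then q h else 0) - (\<Sum>h\<in>F. if b h (f' x) = z then q h else 0)\<bar>" for x z
  have J: "finite J"
    using F(1) by (simp add: J_def)
  have "l1dist (pushfwd q b (f x)) (pushfwd q b (f' x)) = sum (D x) (pt x ` J)" for x
  proof -
    have mem: "b h (f x) \<in> pt x ` J" "b h (f' x) \<in> pt x ` J" if "h \<in> F" for h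
    proof -
      have "b h (f x) = pt x (h, True)" "b h (f' x) = pt x (h, False)"
        by (simp_all add: pt_def)
      then show "b h (f x) \<in> pt x ` J" "b h (f' x) \<in> pt x ` J"
        using that by (auto simp: J_def)
    qed
    have "l1dist (pushfwd q b (f x)) (pushfwd q b (f' x)) = (\<Sum>z\<in>pt x ` J. \<bar>pushfwd q b (f x) z - pushfwd q b (f' x) z\<bar>)"
      using J mem by (intro l1dist_finite_support) (auto simp: pushfwd_finite_support[OF F] intro!: sum.neutral)
    then show ?thesis
      by (simp add: D_def pushfwd_finite_support[OF F])
  qed
  then have "(\<lambda>x. l1dist (pushfwd q b (f x)) (pushfwd q b (f' x)))
      = (\<lambda>x. \<Sum>j\<in>J. D x (pt x j) / (\<Sum>j'\<in>J. if pt x j' = pt x j then 1 else 0))"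
    by (simp add: sum_image_eq_sum_div_multiplicity[OF J])
  also have "\<dots> \<in> borel_measurable M"
    unfolding D_def pt_def by measurable
  finally show ?thesis .
qed

definition least_witness :: "('c::countable \<Rightarrow> bool) \<Rightarrow> 'c" where
  "least_witness P = from_nat (LEAST n. P (from_nat n))"

lemma least_witness: "\<exists>c. P c \<Longrightarrow> P (least_witness P)"
  unfolding least_witness_def by (rule LeastI_ex) (metis from_nat_to_nat)

lemma measurable_least_witness:
  fixes R :: "'c::countable \<Rightarrow> 'x \<Rightarrow> bool"
  assumes [measurable]: "\<And>c. Measurable.pred M (R c)"
  shows "(\<lambda>x. least_witness (\<lambda>c. R c x)) \<in> M \<rightarrow>\<^sub>M count_space UNIV"
  unfolding least_witness_def by measurable

definition first_elems :: "nat \<Rightarrow> 'a::countable set" where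
  "first_elems n = from_nat ` {..n}"

lemma finite_first_elems: "finite (first_elems n)"
  by (simp add: first_elems_def)

lemma mem_first_elems: "to_nat g \<le> n \<Longrightarrow> g \<in> first_elems n"
  unfolding first_elems_def by (metis atMost_iff from_nat_to_nat image_eqI)

lemma borel_measurable_pushfwd_rat_weights:
  fixes act :: "'g \<Rightarrow> 'x::{second_countable_topology, t2_space} \<Rightarrow> 'x"
  assumes [measurable]: "\<And>g. act g \<in> borel_measurable borel"
  shows "(\<lambda>z. pushfwd (rat_weights L) act (fst z) (snd z)) \<in> borel_measurable (borel \<Otimes>\<^sub>M borel)"
proof -
  have "(\<lambda>z. pushfwd (rat_weights L) act (fst z) (snd z))
      = (\<lambda>z. \<Sum>h\<in>fst ` set L. if act h (fst z) = snd z then rat_weights L h else 0)"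
    by (intro ext pushfwd_finite_support) (simp_all add: rat_weights_eq_0)
  also have "\<dots> \<in> borel_measurable (borel \<Otimes>\<^sub>M borel)"
    by measurable
  finally show ?thesis .
qed

lemma pred_reiter_fn_orbit_rat_weights:
  fixes act :: "'g::countable \<Rightarrow> 'x::{second_countable_topology, t2_space} \<Rightarrow> 'x"
  assumes [measurable]: "\<And>g. act g \<in> borel_measurable borel" and S: "finite S"
  shows "Measurable.pred borel (\<lambda>x. reiter_fn act (range (\<lambda>k. act k x)) S eps (rat_weights L))"
proof -
  have L: "finite (fst ` set L)" "\<And>g. g \<notin> fst ` set L \<Longrightarrow> rat_weights L g = 0"
    by (simp_all add: rat_weights_eq_0)
  note [measurable] = borel_measurable_l1dist_pushfwd[OF L]
  have "(\<lambda>x. reiter_fn act (range (\<lambda>k. act k x)) S eps (rat_weights L))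
      = (\<lambda>x. prob_on UNIV (rat_weights L) \<and>
            (\<forall>s\<in>S. \<forall>k. l1dist (pushfwd (rat_weights L) act (act k x)) (pushfwd (rat_weights L) act (act s (act k x))) < eps))"
    by (auto simp: reiter_fn_def)
  also have "Measurable.pred borel \<dots>"
    using S by measurable
  finally show ?thesis .
qed

section \<open>Orbits and cosets of stabilizers\<close>

locale group_action =
  fixes act :: "'g::group_add \<Rightarrow> 'x \<Rightarrow> 'x"
  assumes act_zero [simp]: "act 0 x = x"
    and act_add: "act (g + h) x = act g (act h x)"
begin

lemma act_minus_act [simp]: "act (- g) (act g x) = x"
  by (simp flip: act_add)

lemma orbit_act: "range (\<lambda>k. act k (act g x)) = range (\<lambda>k. act k x)"
proof -
  have "range (\<lambda>k. act k (act g x)) = (\<lambda>k. act k x) ` range (\<lambda>k. k + g)"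
    unfolding image_image by (simp add: act_add)
  then show ?thesis
    by simp
qed

lemma fibre_eq_coset: "{g. act g x = act k x} = coset_action k (stabilizer act x)"
proof (intro set_eqI iffI)
  fix g assume "g \<in> {g. act g x = act k x}"
  then have "- k + g \<in> stabilizer act x"
    by (simp add: stabilizer_def act_add)
  then show "g \<in> coset_action k (stabilizer act x)"
    unfolding coset_action_def by (rule image_eqI[rotated]) (simp add: add.assoc)
next
  fix g assume "g \<in> coset_action k (stabilizer act x)"
  then obtain h where "act h x = x" "g = k + h"
    by (auto simp: coset_action_def stabilizer_def)
  then show "g \<in> {g. act g x = act k x}"
    by (simp add: act_add)
qed

text \<open>The orbit of x is identified with G/Stab(x) by sending y to its fibre {g. act g x = y}.\<close>
lemma l1dist_pushfwd_cosets:
  "l1dist (pushfwd p coset_action (coset_action k (stabilizer act x)))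
      (pushfwd p coset_action (coset_action s (coset_action k (stabilizer act x))))
   = l1dist (pushfwd p act (act k x)) (pushfwd p act (act s (act k x)))"
proof -
  define H where "H = stabilizer act x"
  define \<psi> where "\<psi> y = {g. act g x = y}" for y
  have \<psi>: "\<psi> (act g x) = coset_action g H" for g
    unfolding \<psi>_def H_def by (rule fibre_eq_coset)
  have "inj_on \<psi> (range (\<lambda>k. act k x))"
  proof (rule inj_onI)
    fix y y' assume "y \<in> range (\<lambda>k. act k x)" "\<psi> y = \<psi> y'"
    then obtain k where "y = act k x" "k \<in> \<psi> y'"
      by (auto simp: \<psi>_def)
    then show "y = y'"
      by (simp add: \<psi>_def)
  qed
  then have "inj_on \<psi> (range (\<lambda>g. act g (act k x)) \<union> range (\<lambda>g. act g (act s (act k x))))"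
    by (simp add: orbit_act)
  then have "l1dist (\<lambda>z. \<Sum>\<^sub>\<infinity>g\<in>{g. \<psi> (act g (act k x)) = z}. p g) (\<lambda>z. \<Sum>\<^sub>\<infinity>g\<in>{g. \<psi> (act g (act s (act k x))) = z}. p g)
      = l1dist (pushfwd p act (act k x)) (pushfwd p act (act s (act k x)))"
    unfolding pushfwd_def[abs_def] by (rule l1dist_fibre_sums_comp_inj)
  moreover have "\<psi> (act g (act k x)) = coset_action g (coset_action k H)"
    "\<psi> (act g (act s (act k x))) = coset_action g (coset_action s (coset_action k H))" for g
    by (simp_all add: \<psi> flip: act_add) (simp_all add: coset_action_def image_image add.assoc)
  ultimately show ?thesis
    by (simp add: pushfwd_def[abs_def] H_def)
qed

lemma reiter_fn_orbit:
  assumes "uniformly_coamenable (stabilizer act x)" "finite S" "eps > 0"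
  shows "\<exists>p. reiter_fn act (range (\<lambda>k. act k x)) S eps p"
proof -
  obtain p where p: "reiter_fn coset_action (left_cosets (stabilizer act x)) S eps p"
    using assms unfolding uniformly_coamenable_def by blast
  have "coset_action k (stabilizer act x) \<in> left_cosets (stabilizer act x)" for k
    by (auto simp: left_cosets_def coset_action_def)
  then have "reiter_fn act (range (\<lambda>k. act k x)) S eps p"
    using p by (auto simp: reiter_fn_def simp flip: l1dist_pushfwd_cosets)
  then show ?thesis by blast
qed

lemma rat_reiter_fn_orbit:
  assumes "uniformly_coamenable (stabilizer act x)" "finite S" "eps > 0"
  shows "\<exists>L. reiter_fn act (range (\<lambda>k. act k x)) S eps (rat_weights L)"
proof -
  obtain p where p: "reiter_fn act (range (\<lambda>k. act k x)) S (eps / 2) p"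
    using reiter_fn_orbit[OF assms(1,2)] assms(3) by (meson half_gt_zero)
  obtain L where L: "prob_on UNIV (rat_weights L)" "l1dist p (rat_weights L) < eps / 4"
    using rat_weights_dense[of p "eps / 4"] p assms(3) by (auto simp: reiter_fn_def)
  have "reiter_fn act (range (\<lambda>k. act k x)) S (eps / 2 + 2 * (eps / 4)) (rat_weights L)"
    using reiter_fn_perturb[OF p L(1), of "eps / 4"] L(2) by simp
  moreover have "eps / 2 + 2 * (eps / 4) = eps"
    by simp
  ultimately show ?thesis
    by auto
qed

end

section \<open>Borel amenability of the orbit relation\<close>

lemma borel_amenable_orbit_eqrelI:
  fixes act :: "'g::countable \<Rightarrow> 'x::topological_space \<Rightarrow> 'x"
    and q :: "nat \<Rightarrow> 'x \<Rightarrow> 'g \<Rightarrow> real"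
  assumes prob: "\<And>i x. prob_on UNIV (q i x)"
    and invariant: "\<And>i g x. q i (act g x) = q i x"
    and reiter: "\<And>i x s. s \<in> first_elems i
      \<Longrightarrow> l1dist (pushfwd (q i x) act x) (pushfwd (q i x) act (act s x)) < 1 / Suc i"
    and meas: "\<And>i. (\<lambda>z. pushfwd (q i (fst z)) act (fst z) (snd z)) \<in> borel_measurable (borel \<Otimes>\<^sub>M borel)"
  shows "borel_amenable borel (orbit_eqrel borel act)"
  unfolding borel_amenable_def
proof (intro exI[of _ "\<lambda>i x. pushfwd (q i x) act x"] conjI allI ballI impI)
  have "orbit_eqrel borel act `` {x} = range (\<lambda>g. act g x)" for x
    by (auto simp: orbit_eqrel_def)
  then show "prob_on (orbit_eqrel borel act `` {x}) (pushfwd (q i x) act x)" for i x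
    by (simp add: prob_on_pushfwd prob)
next
  fix x y and eps :: real
  assume "(x, y) \<in> orbit_eqrel borel act" "eps > 0"
  then obtain g n where y: "y = act g x" and n: "1 / Suc n < eps"
    by (auto simp: orbit_eqrel_def dest: reals_Archimedean simp: inverse_eq_divide)
  have "l1dist (pushfwd (q i x) act x) (pushfwd (q i y) act y) < eps" if "max n (to_nat g) \<le> i" for i
  proof -
    have "g \<in> first_elems i"
      using that by (intro mem_first_elems) simp
    then have "l1dist (pushfwd (q i x) act x) (pushfwd (q i y) act y) < 1 / Suc i"
      using reiter by (simp add: y invariant)
    also have "\<dots> \<le> 1 / Suc n"
      using that by (simp add: frac_le)
    finally show ?thesis
      using n by linarith
  qed
  then show "\<forall>\<^sub>F i in sequentially. l1dist (pushfwd (q i x) act x) (pushfwd (q i y) act y) < eps"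
    unfolding eventually_sequentially by blast
next
  show "(\<lambda>(x, y). pushfwd (q i x) act x y) \<in> borel_measurable (restrict_space (borel \<Otimes>\<^sub>M borel) (orbit_eqrel borel act))"
    for i
    using meas[of i] by (intro measurable_restrict_space1) (simp add: case_prod_beta')
qed

theorem lemma4p4:
  fixes a :: "'g::{group_add, countable} \<Rightarrow> 'x::polish_space \<Rightarrow> 'x"
  assumes "borel_action (borel :: 'x measure) a"
    and "\<forall>x. uniformly_coamenable (stabilizer a x)"
  shows "borel_amenable (borel :: 'x measure) (orbit_eqrel (borel :: 'x measure) a)"
proof -
  interpret group_action a
    using assms(1) by unfold_locales (simp_all add: borel_action_def)
  have [measurable]: "\<And>g. a g \<in> borel_measurable borel"
    using assms(1) by (simp add: borel_action_def)
  define R where "R i L x \<longleftrightarrow> reiter_fn a (range (\<lambda>k. a k x)) (first_elems i) (1 / Suc i) (rat_weights L)"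
    for i L x
  define W where "W i x = least_witness (\<lambda>L. R i L x)" for i x
  have R_W: "R i (W i x) x" for i x
    unfolding W_def R_def
    by (rule least_witness, rule rat_reiter_fn_orbit) (simp_all add: assms(2) finite_first_elems)
  have [measurable]: "Measurable.pred borel (R i L)" for i L
    unfolding R_def by (intro pred_reiter_fn_orbit_rat_weights finite_first_elems) simp
  show ?thesis
  proof (rule borel_amenable_orbit_eqrelI[where q = "\<lambda>i x. rat_weights (W i x)"])
    show "prob_on UNIV (rat_weights (W i x))"
      and "s \<in> first_elems i \<Longrightarrow> l1dist (pushfwd (rat_weights (W i x)) a x)
             (pushfwd (rat_weights (W i x)) a (a s x)) < 1 / Suc i" for i x s
      using R_W[of i x] act_zero[of x] unfolding R_def reiter_fn_def by (metis rangeI)+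
    show "rat_weights (W i (a g x)) = rat_weights (W i x)" for i g x
      by (simp add: W_def R_def orbit_act)
    show "(\<lambda>z. pushfwd (rat_weights (W i (fst z))) a (fst z) (snd z)) \<in> borel_measurable (borel \<Otimes>\<^sub>M borel)" for i
      unfolding W_def
      by (rule measurable_compose_countable[OF borel_measurable_pushfwd_rat_weights])
        (simp_all add: measurable_compose[OF measurable_fst measurable_least_witness])
  qed
qed

end
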